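(* Consider a finite super-modular game with player set $\mathcal V$ and binary action sets $\{\pm1\}$. Then: (i) the maps $f^+,f^-,g^+,g^-:\mathcal X\to\mathcal X$ are monotone nondecreasing (i.e., $x\le y$ implies $f^\pm(x)\le f^\pm(y)$ and $g^\pm(x)\le g^\pm(y)$); (ii) a configuration $x$ is an equilibrium if and only if $f^+(x)=x=f^-(x)$; (iii) a configuration $x$ is a strict equilibrium if and only if $g^+(x)=x=g^-(x)$.
   Context: Game: finite player set $\mathcal V$, each player has action set $\{-1,+1\}$, configurations $x\in\mathcal X=\{-1,+1\}^{\mathcal V}$, utilities $u_i:\mathcal X\to\mathbb R$; write $u_i(x)=u_i(x_i,x_{-i})$. Best response: $\mathcal B_i(x_{-i})=\arg\max_{x_i\in\{\pm1\}}u_i(x_i,x_{-i})$. An equilibrium is $x^*$ with $x_i^*\in\mathcal B_i(x^*_{-i})$ for all $i$; it is strict if $\mathcal B_i(x^*_{-i})=\{x^*_i\}$ for all $i$. The game is super-modular if for every $i$, $u_i(1,x_{-i})-u_i(-1,x_{-i})\ge u_i(1,y_{-i})-u_i(-1,y_{-i})$ whenever $x_{-i}\ge y_{-i}$ (componentwise order). $\bigvee L,\bigwedge L$ denote entrywise max and min of a set $L$. Paths: a length-$l$ admissible path from $x$ to $y$ is $(x^{(0)},\dots,x^{(l)})$ with $x^{(0)}=x$, $x^{(l)}=y$, and for each $k$ a player $i_k$ with $x^{(k)}_{-i_k}=x^{(k-1)}_{-i_k}$ and $x^{(k)}_{i_k}\ne x^{(k-1)}_{i_k}$ (length $0$ allowed).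 It is an I-path if $u_{i_k}(x^{(k)})>u_{i_k}(x^{(k-1)})$ for all $k$, a BR-path if $u_{i_k}(x^{(k)})\ge u_{i_k}(x^{(k-1)})$ for all $k$; monotone if $x^{(0)}\lneq\cdots\lneq x^{(l)}$, anti-monotone if $x^{(0)}\gneq\cdots\gneq x^{(l)}$. Maps: $f^+(x)=\bigvee\{y: y$ reachable from $x$ by a monotone I-path$\}$, $f^-(x)=\bigwedge\{y: y$ reachable from $x$ by an anti-monotone I-path$\}$, $g^+(x)=\bigvee\{y: y$ reachable from $x$ by a monotone BR-path$\}$, $g^-(x)=\bigwedge\{y: y$ reachable from $x$ by an anti-monotone BR-path$\}$. *)

theory Defs
  imports Complex_Main
begin

type_synonym 'v config = "'v \<Rightarrow> int"
type_synonym 'v utils = "'v \<Rightarrow> 'v config \<Rightarrow> real"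

definition Conf :: "'v config set" where
  "Conf = {x. \<forall>i. x i \<in> {-1, 1}}"

definition best_resp :: "'v utils \<Rightarrow> 'v \<Rightarrow> 'v config \<Rightarrow> int set" where
  "best_resp u i x = {a \<in> {-1, 1}. \<forall>b \<in> {-1, 1}. u i (x(i := b)) \<le> u i (x(i := a))}"

definition equilibrium :: "'v utils \<Rightarrow> 'v config \<Rightarrow> bool" where
  "equilibrium u x \<longleftrightarrow> x \<in> Conf \<and> (\<forall>i. x i \<in> best_resp u i x)"

definition strict_equilibrium :: "'v utils \<Rightarrow> 'v config \<Rightarrow> bool" where
  "strict_equilibrium u x \<longleftrightarrow> x \<in> Conf \<and> (\<forall>i. best_resp u i x = {x i})"

definition supermodular :: "'v utils \<Rightarrow> bool" where
  "supermodular u \<longleftrightarrow> (\<forall>i x y. x \<in> Conf \<longrightarrow> y \<in> Conf \<longrightarrow> (\<forall>j. j \<noteq> i \<longrightarrow> y j \<le> x j) \<longrightarrow>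
     u i (x(i := 1)) - u i (x(i := -1)) \<ge> u i (y(i := 1)) - u i (y(i := -1)))"

definition I_step :: "'v utils \<Rightarrow> 'v config \<Rightarrow> 'v config \<Rightarrow> bool" where
  "I_step u x y \<longleftrightarrow> x \<in> Conf \<and> y \<in> Conf \<and>
     (\<exists>i. (\<forall>j. j \<noteq> i \<longrightarrow> y j = x j) \<and> y i \<noteq> x i \<and> u i y > u i x)"

definition BR_step :: "'v utils \<Rightarrow> 'v config \<Rightarrow> 'v config \<Rightarrow> bool" where
  "BR_step u x y \<longleftrightarrow> x \<in> Conf \<and> y \<in> Conf \<and>
     (\<exists>i. (\<forall>j. j \<noteq> i \<longrightarrow> y j = x j) \<and> y i \<noteq> x i \<and> u i y \<ge> u i x)"

definition mono_I_reach :: "'v utils \<Rightarrow> 'v config \<Rightarrow> 'v config \<Rightarrow> bool" where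
  "mono_I_reach u = (\<lambda>a b. I_step u a b \<and> a < b)\<^sup>*\<^sup>*"

definition anti_I_reach :: "'v utils \<Rightarrow> 'v config \<Rightarrow> 'v config \<Rightarrow> bool" where
  "anti_I_reach u = (\<lambda>a b. I_step u a b \<and> b < a)\<^sup>*\<^sup>*"

definition mono_BR_reach :: "'v utils \<Rightarrow> 'v config \<Rightarrow> 'v config \<Rightarrow> bool" where
  "mono_BR_reach u = (\<lambda>a b. BR_step u a b \<and> a < b)\<^sup>*\<^sup>*"

definition anti_BR_reach :: "'v utils \<Rightarrow> 'v config \<Rightarrow> 'v config \<Rightarrow> bool" where
  "anti_BR_reach u = (\<lambda>a b. BR_step u a b \<and> b < a)\<^sup>*\<^sup>*"

definition f_plus :: "'v utils \<Rightarrow> 'v config \<Rightarrow> 'v config" where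
  "f_plus u x = (\<lambda>i. Max {y i | y. mono_I_reach u x y})"

definition f_minus :: "'v utils \<Rightarrow> 'v config \<Rightarrow> 'v config" where
  "f_minus u x = (\<lambda>i. Min {y i | y. anti_I_reach u x y})"

definition g_plus :: "'v utils \<Rightarrow> 'v config \<Rightarrow> 'v config" where
  "g_plus u x = (\<lambda>i. Max {y i | y. mono_BR_reach u x y})"

definition g_minus :: "'v utils \<Rightarrow> 'v config \<Rightarrow> 'v config" where
  "g_minus u x = (\<lambda>i. Min {y i | y. anti_BR_reach u x y})"

end

theory Submission
  imports Defs
begin

text \<open>Improvement and best-response dynamics differ only in whether a deviation must raise
  the deviator's utility strictly or weakly, so both are treated at once for an acceptance
  relation Q on (old, new) utility values that is monotone in the gain. In a super-modular game
  a monotone path from x can be pushed up to a monotone path from any y \<ge> x that ends at the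
  supremum of its endpoint with y, because raising one action from a lower profile gains at most
  as much as the same move from a higher one. Hence the componentwise maximum of what is reachable
  upward is monotone in the start, and dually the minimum of what is reachable downward.
  Moreover x is fixed by both maps exactly when no single deviation is accepted at x, which for
  strict and weak improvement is the (strict) equilibrium condition.\<close>

definition deviation :: "(real \<Rightarrow> real \<Rightarrow> bool) \<Rightarrow> 'v utils \<Rightarrow> 'v config \<Rightarrow> 'v config \<Rightarrow> bool" where
  "deviation Q u x y \<longleftrightarrow> x \<in> Conf \<and> y \<in> Conf \<and>
     (\<exists>i. (\<forall>j. j \<noteq> i \<longrightarrow> y j = x j) \<and> y i \<noteq> x i \<and> Q (u i x) (u i y))"

definition gain_monotone :: "(real \<Rightarrow> real \<Rightarrow> bool) \<Rightarrow> bool" where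
  "gain_monotone Q \<longleftrightarrow> (\<forall>p q p' q'. Q p q \<longrightarrow> q - p \<le> q' - p' \<longrightarrow> Q p' q')"

definition up_reach :: "(real \<Rightarrow> real \<Rightarrow> bool) \<Rightarrow> 'v utils \<Rightarrow> 'v config \<Rightarrow> 'v config \<Rightarrow> bool" where
  "up_reach Q u = (\<lambda>a b. deviation Q u a b \<and> a < b)\<^sup>*\<^sup>*"

definition down_reach :: "(real \<Rightarrow> real \<Rightarrow> bool) \<Rightarrow> 'v utils \<Rightarrow> 'v config \<Rightarrow> 'v config \<Rightarrow> bool" where
  "down_reach Q u = (\<lambda>a b. deviation Q u a b \<and> b < a)\<^sup>*\<^sup>*"

definition reach_max :: "(real \<Rightarrow> real \<Rightarrow> bool) \<Rightarrow> 'v utils \<Rightarrow> 'v config \<Rightarrow> 'v config" where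
  "reach_max Q u x = (\<lambda>i. Max {y i | y. up_reach Q u x y})"

definition reach_min :: "(real \<Rightarrow> real \<Rightarrow> bool) \<Rightarrow> 'v utils \<Rightarrow> 'v config \<Rightarrow> 'v config" where
  "reach_min Q u x = (\<lambda>i. Min {y i | y. down_reach Q u x y})"

lemma gain_monotone_less: "gain_monotone (<)"
  by (auto simp: gain_monotone_def)

lemma gain_monotone_le: "gain_monotone (\<le>)"
  by (auto simp: gain_monotone_def)

lemma f_plus_eq_reach_max: "f_plus u = reach_max (<) u"
  and f_minus_eq_reach_min: "f_minus u = reach_min (<) u"
proof -
  have "I_step u = deviation (<) u"
    by (intro ext) (simp add: I_step_def deviation_def)
  then show "f_plus u = reach_max (<) u" "f_minus u = reach_min (<) u"
    by (simp_all add: fun_eq_iff f_plus_def f_minus_def reach_max_def reach_min_def mono_I_reach_def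
        anti_I_reach_def up_reach_def down_reach_def)
qed

lemma g_plus_eq_reach_max: "g_plus u = reach_max (\<le>) u"
  and g_minus_eq_reach_min: "g_minus u = reach_min (\<le>) u"
proof -
  have "BR_step u = deviation (\<le>) u"
    by (intro ext) (simp add: BR_step_def deviation_def)
  then show "g_plus u = reach_max (\<le>) u" "g_minus u = reach_min (\<le>) u"
    by (simp_all add: fun_eq_iff g_plus_def g_minus_def reach_max_def reach_min_def mono_BR_reach_def
        anti_BR_reach_def up_reach_def down_reach_def)
qed

lemma Conf_cases: "x \<in> Conf \<Longrightarrow> x i = -1 \<or> x i = 1"
  by (auto simp: Conf_def)

lemma Conf_fun_upd: "x \<in> Conf \<Longrightarrow> b = -1 \<or> b = 1 \<Longrightarrow> x(i := b) \<in> Conf"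
  by (auto simp: Conf_def)

lemma sup_Conf: "x \<in> Conf \<Longrightarrow> y \<in> Conf \<Longrightarrow> sup x y \<in> Conf"
  by (auto simp: Conf_def sup_max max_def)

lemma inf_Conf: "x \<in> Conf \<Longrightarrow> y \<in> Conf \<Longrightarrow> inf x y \<in> Conf"
  by (auto simp: Conf_def inf_min min_def)

lemma deviation_iff_flip:
  assumes x: "x \<in> Conf"
  shows "deviation Q u x y \<longleftrightarrow> (\<exists>i. y = x(i := - x i) \<and> Q (u i x) (u i y))"
proof
  assume "deviation Q u x y"
  then obtain i where y: "y \<in> Conf" "\<forall>j. j \<noteq> i \<longrightarrow> y j = x j" "y i \<noteq> x i"
    and Q: "Q (u i x) (u i y)"
    by (auto simp: deviation_def)
  have "y i = - x i"
    using y(3) Conf_cases[OF y(1), of i] Conf_cases[OF x, of i] by auto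
  with y(2) have "y = x(i := - x i)"
    by (auto simp: fun_eq_iff)
  with Q show "\<exists>i. y = x(i := - x i) \<and> Q (u i x) (u i y)"
    by blast
next
  assume "\<exists>i. y = x(i := - x i) \<and> Q (u i x) (u i y)"
  then obtain i where y: "y = x(i := - x i)" and Q: "Q (u i x) (u i y)"
    by blast
  have "x i = -1 \<or> x i = 1"
    using Conf_cases[OF x] .
  then have "y \<in> Conf" and "y i \<noteq> x i"
    using Conf_fun_upd[OF x, of "- x i" i] y by auto
  with x y Q show "deviation Q u x y"
    unfolding deviation_def by (intro conjI exI[of _ i]) auto
qed

lemma deviation_up:
  assumes "deviation Q u a b" "a < b"
  shows "\<exists>i. a i = -1 \<and> b = a(i := 1) \<and> Q (u i a) (u i b)"
proof -
  have a: "a \<in> Conf"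
    using assms(1) by (simp add: deviation_def)
  then obtain i where b: "b = a(i := - a i)" and Q: "Q (u i a) (u i b)"
    using assms(1) deviation_iff_flip by blast
  have "a i \<le> b i"
    using assms(2) by (simp add: less_fun_def le_fun_def)
  then have "a i = -1"
    using b Conf_cases[OF a, of i] by auto
  with b Q show ?thesis
    by auto
qed

lemma deviation_down:
  assumes "deviation Q u a b" "b < a"
  shows "\<exists>i. a i = 1 \<and> b = a(i := -1) \<and> Q (u i a) (u i b)"
proof -
  have a: "a \<in> Conf"
    using assms(1) by (simp add: deviation_def)
  then obtain i where b: "b = a(i := - a i)" and Q: "Q (u i a) (u i b)"
    using assms(1) deviation_iff_flip by blast
  have "b i \<le> a i"
    using assms(2) by (simp add: less_fun_def le_fun_def)
  then have "a i = 1"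
    using b Conf_cases[OF a, of i] by auto
  with b Q show ?thesis
    by auto
qed

lemma up_reach_Conf: "up_reach Q u x y \<Longrightarrow> x \<in> Conf \<Longrightarrow> y \<in> Conf"
  unfolding up_reach_def by (induction rule: rtranclp_induct) (auto simp: deviation_def)

lemma down_reach_Conf: "down_reach Q u x y \<Longrightarrow> x \<in> Conf \<Longrightarrow> y \<in> Conf"
  unfolding down_reach_def by (induction rule: rtranclp_induct) (auto simp: deviation_def)

subsection \<open>Lifting paths in super-modular games\<close>

lemma supermodular_raise_accepted:
  assumes sm: "supermodular u" and Q: "gain_monotone Q"
    and a: "a \<in> Conf" and c: "c \<in> Conf" and "a \<le> c" and "a i = -1" and "c i = -1"
    and accepted: "Q (u i a) (u i (a(i := 1)))"
  shows "Q (u i c) (u i (c(i := 1)))"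
proof -
  have "u i (a(i := 1)) - u i (a(i := -1)) \<le> u i (c(i := 1)) - u i (c(i := -1))"
    using sm a c \<open>a \<le> c\<close> unfolding supermodular_def le_fun_def by blast
  moreover have "a(i := -1) = a" "c(i := -1) = c"
    using \<open>a i = -1\<close> \<open>c i = -1\<close> by auto
  ultimately have "u i (a(i := 1)) - u i a \<le> u i (c(i := 1)) - u i c"
    by simp
  with Q accepted show ?thesis
    unfolding gain_monotone_def by blast
qed

lemma supermodular_lower_accepted:
  assumes sm: "supermodular u" and Q: "gain_monotone Q"
    and a: "a \<in> Conf" and c: "c \<in> Conf" and "c \<le> a" and "a i = 1" and "c i = 1"
    and accepted: "Q (u i a) (u i (a(i := -1)))"
  shows "Q (u i c) (u i (c(i := -1)))"
proof -
  have "u i (c(i := 1)) - u i (c(i := -1)) \<le> u i (a(i := 1)) - u i (a(i := -1))"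
    using sm a c \<open>c \<le> a\<close> unfolding supermodular_def le_fun_def by blast
  moreover have "a(i := 1) = a" "c(i := 1) = c"
    using \<open>a i = 1\<close> \<open>c i = 1\<close> by auto
  ultimately have "u i (a(i := -1)) - u i a \<le> u i (c(i := -1)) - u i c"
    by simp
  with Q accepted show ?thesis
    unfolding gain_monotone_def by blast
qed

lemma up_reach_sup:
  assumes sm: "supermodular u" and Q: "gain_monotone Q"
    and x: "x \<in> Conf" and y: "y \<in> Conf" and "x \<le> y" and "up_reach Q u x z"
  shows "up_reach Q u y (sup z y)"
  using \<open>up_reach Q u x z\<close> unfolding up_reach_def
proof (induction rule: rtranclp_induct)
  case base
  then show ?case
    using \<open>x \<le> y\<close> by (simp add: sup_absorb2)
next
  case (step a b)
  have a: "a \<in> Conf"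
    using up_reach_Conf[OF _ x] step(1) by (simp add: up_reach_def)
  obtain i where "a i = -1" and b: "b = a(i := 1)" and accepted: "Q (u i a) (u i (a(i := 1)))"
    using deviation_up step(2) by blast
  show ?case
  proof (cases "y i = 1")
    case True
    then have "sup b y = sup a y"
      using \<open>a i = -1\<close> b by (auto simp: fun_eq_iff sup_max)
    with step(3) show ?thesis
      by simp
  next
    case False
    then have "y i = -1"
      using Conf_cases[OF y] by auto
    define c where "c = sup a y"
    have c: "c \<in> Conf" and "c i = -1" and "a \<le> c"
      using sup_Conf[OF a y] \<open>a i = -1\<close> \<open>y i = -1\<close> by (simp_all add: c_def)
    have "Q (u i c) (u i (c(i := 1)))"
      by (rule supermodular_raise_accepted[OF sm Q a c])
        (use \<open>a \<le> c\<close> \<open>a i = -1\<close> \<open>c i = -1\<close> accepted in auto)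
    then have "deviation Q u c (c(i := 1))"
      unfolding deviation_iff_flip[OF c] using \<open>c i = -1\<close> by (intro exI[of _ i]) simp
    moreover have "c < c(i := 1)"
      using \<open>c i = -1\<close> by (auto simp: less_fun_def le_fun_def)
    moreover have "sup b y = c(i := 1)"
      using b \<open>y i = -1\<close> by (auto simp: fun_eq_iff c_def sup_max)
    ultimately show ?thesis
      using step(3) c_def by (metis (no_types, lifting) rtranclp.rtrancl_into_rtrancl)
  qed
qed

lemma down_reach_inf:
  assumes sm: "supermodular u" and Q: "gain_monotone Q"
    and x: "x \<in> Conf" and y: "y \<in> Conf" and "x \<le> y" and "down_reach Q u y z"
  shows "down_reach Q u x (inf z x)"
  using \<open>down_reach Q u y z\<close> unfolding down_reach_def
proof (induction rule: rtranclp_induct)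
  case base
  then show ?case
    using \<open>x \<le> y\<close> by (simp add: inf_absorb2)
next
  case (step a b)
  have a: "a \<in> Conf"
    using down_reach_Conf[OF _ y] step(1) by (simp add: down_reach_def)
  obtain i where "a i = 1" and b: "b = a(i := -1)" and accepted: "Q (u i a) (u i (a(i := -1)))"
    using deviation_down step(2) by blast
  show ?case
  proof (cases "x i = -1")
    case True
    then have "inf b x = inf a x"
      using \<open>a i = 1\<close> b by (auto simp: fun_eq_iff inf_min)
    with step(3) show ?thesis
      by simp
  next
    case False
    then have "x i = 1"
      using Conf_cases[OF x] by auto
    define c where "c = inf a x"
    have c: "c \<in> Conf" and "c i = 1" and "c \<le> a"
      using inf_Conf[OF a x] \<open>a i = 1\<close> \<open>x i = 1\<close> by (simp_all add: c_def)
    have "Q (u i c) (u i (c(i := -1)))"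
      by (rule supermodular_lower_accepted[OF sm Q a c])
        (use \<open>c \<le> a\<close> \<open>a i = 1\<close> \<open>c i = 1\<close> accepted in auto)
    then have "deviation Q u c (c(i := -1))"
      unfolding deviation_iff_flip[OF c] using \<open>c i = 1\<close> by (intro exI[of _ i]) simp
    moreover have "c(i := -1) < c"
      using \<open>c i = 1\<close> by (auto simp: less_fun_def le_fun_def)
    moreover have "inf b x = c(i := -1)"
      using b \<open>x i = 1\<close> by (auto simp: fun_eq_iff c_def inf_min)
    ultimately show ?thesis
      using step(3) c_def by (metis (no_types, lifting) rtranclp.rtrancl_into_rtrancl)
  qed
qed

lemma finite_up_reach_values: "x \<in> Conf \<Longrightarrow> finite {y i | y. up_reach Q u x y}"
  by (rule finite_subset[of _ "{-1, 1}"]) (auto dest: up_reach_Conf Conf_cases)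

lemma finite_down_reach_values: "x \<in> Conf \<Longrightarrow> finite {y i | y. down_reach Q u x y}"
  by (rule finite_subset[of _ "{-1, 1}"]) (auto dest: down_reach_Conf Conf_cases)

lemma reach_max_upper:
  assumes "x \<in> Conf" and "up_reach Q u x y"
  shows "y \<le> reach_max Q u x"
  unfolding le_fun_def reach_max_def
proof
  fix i
  show "y i \<le> Max {y i | y. up_reach Q u x y}"
    by (rule Max_ge[OF finite_up_reach_values[OF \<open>x \<in> Conf\<close>]]) (use assms(2) in blast)
qed

lemma reach_max_least:
  assumes "x \<in> Conf" and "\<And>y. up_reach Q u x y \<Longrightarrow> y \<le> w"
  shows "reach_max Q u x \<le> w"
  unfolding le_fun_def reach_max_def
proof
  fix i
  have "up_reach Q u x x"
    by (simp add: up_reach_def)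
  then show "Max {y i | y. up_reach Q u x y} \<le> w i"
    using assms(2) by (intro Max.boundedI[OF finite_up_reach_values[OF \<open>x \<in> Conf\<close>]])
      (auto simp: le_fun_def)
qed

lemma reach_min_lower:
  assumes "x \<in> Conf" and "down_reach Q u x y"
  shows "reach_min Q u x \<le> y"
  unfolding le_fun_def reach_min_def
proof
  fix i
  show "Min {y i | y. down_reach Q u x y} \<le> y i"
    by (rule Min_le[OF finite_down_reach_values[OF \<open>x \<in> Conf\<close>]]) (use assms(2) in blast)
qed

lemma reach_min_greatest:
  assumes "x \<in> Conf" and "\<And>y. down_reach Q u x y \<Longrightarrow> w \<le> y"
  shows "w \<le> reach_min Q u x"
  unfolding le_fun_def reach_min_def
proof
  fix i
  have "down_reach Q u x x"
    by (simp add: down_reach_def)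
  then show "w i \<le> Min {y i | y. down_reach Q u x y}"
    using assms(2) by (intro Min.boundedI[OF finite_down_reach_values[OF \<open>x \<in> Conf\<close>]])
      (auto simp: le_fun_def)
qed

lemma reach_max_mono:
  assumes "supermodular u" "gain_monotone Q" "x \<in> Conf" "y \<in> Conf" "x \<le> y"
  shows "reach_max Q u x \<le> reach_max Q u y"
proof (rule reach_max_least[OF \<open>x \<in> Conf\<close>])
  fix z
  assume "up_reach Q u x z"
  then have "sup z y \<le> reach_max Q u y"
    using reach_max_upper[OF \<open>y \<in> Conf\<close>] up_reach_sup[OF assms] by blast
  then show "z \<le> reach_max Q u y"
    by (rule le_supE)
qed

lemma reach_min_mono:
  assumes "supermodular u" "gain_monotone Q" "x \<in> Conf" "y \<in> Conf" "x \<le> y"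
  shows "reach_min Q u x \<le> reach_min Q u y"
proof (rule reach_min_greatest[OF \<open>y \<in> Conf\<close>])
  fix z
  assume "down_reach Q u y z"
  then have "reach_min Q u x \<le> inf z x"
    using reach_min_lower[OF \<open>x \<in> Conf\<close>] down_reach_inf[OF assms] by blast
  then show "reach_min Q u x \<le> z"
    by (rule le_infE)
qed

lemma reach_max_min_fixed_iff:
  assumes x: "x \<in> Conf"
  shows "(reach_max Q u x = x \<and> x = reach_min Q u x) \<longleftrightarrow> (\<nexists>y. deviation Q u x y)"
proof
  assume "reach_max Q u x = x \<and> x = reach_min Q u x"
  then have max: "reach_max Q u x = x" and min: "reach_min Q u x = x"
    by metis+
  show "\<nexists>y. deviation Q u x y"
  proof
    assume "\<exists>y. deviation Q u x y"
    then obtain y i where dev: "deviation Q u x y" and y: "y = x(i := - x i)"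
      using deviation_iff_flip[OF x] by meson
    consider "x i = -1" | "x i = 1"
      using Conf_cases[OF x] by blast
    then consider "x < y" | "y < x"
      unfolding y
      by cases (auto simp: less_fun_def le_fun_def)
    then show False
    proof cases
      case 1
      with dev have "y \<le> reach_max Q u x"
        by (intro reach_max_upper[OF x]) (simp add: up_reach_def r_into_rtranclp)
      with 1 max show False
        by (simp add: less_le_not_le)
    next
      case 2
      with dev have "reach_min Q u x \<le> y"
        by (intro reach_min_lower[OF x]) (simp add: down_reach_def r_into_rtranclp)
      with 2 min show False
        by (simp add: less_le_not_le)
    qed
  qed
next
  assume "\<nexists>y. deviation Q u x y"
  then have up: "up_reach Q u x y \<Longrightarrow> y = x" and down: "down_reach Q u x y \<Longrightarrow> y = x" for y
    unfolding up_reach_def down_reach_def by (auto elim: converse_rtranclpE)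
  have "reach_max Q u x \<le> x"
    by (intro reach_max_least[OF x]) (auto dest: up)
  moreover have "x \<le> reach_max Q u x"
    by (rule reach_max_upper[OF x]) (simp add: up_reach_def)
  moreover have "reach_min Q u x \<le> x"
    by (rule reach_min_lower[OF x]) (simp add: down_reach_def)
  moreover have "x \<le> reach_min Q u x"
    by (intro reach_min_greatest[OF x]) (auto dest: down)
  ultimately show "reach_max Q u x = x \<and> x = reach_min Q u x"
    by (simp add: order.antisym)
qed

subsection \<open>Equilibria as configurations without accepted deviations\<close>

lemma best_resp_Conf:
  assumes "x \<in> Conf"
  shows "best_resp u i x =
    {a \<in> {x i, - x i}. u i x \<le> u i (x(i := a)) \<and> u i (x(i := - x i)) \<le> u i (x(i := a))}"
proof -
  have "{-1, 1} = {x i, - x i}"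
    using Conf_cases[OF assms, of i] by auto
  then show ?thesis
    unfolding best_resp_def by auto
qed

lemma equilibrium_iff_no_improving_deviation:
  assumes x: "x \<in> Conf"
  shows "equilibrium u x \<longleftrightarrow> (\<nexists>y. deviation (<) u x y)"
proof -
  have "x i \<in> best_resp u i x \<longleftrightarrow> \<not> u i x < u i (x(i := - x i))" for i
    unfolding best_resp_Conf[OF x] by auto
  then show ?thesis
    using x deviation_iff_flip[OF x] unfolding equilibrium_def by auto
qed

lemma strict_equilibrium_iff_no_weak_deviation:
  assumes x: "x \<in> Conf"
  shows "strict_equilibrium u x \<longleftrightarrow> (\<nexists>y. deviation (\<le>) u x y)"
proof -
  have "best_resp u i x = {x i} \<longleftrightarrow> \<not> u i x \<le> u i (x(i := - x i))" for i
  proof -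
    have "- x i \<noteq> x i"
      using Conf_cases[OF x, of i] by auto
    then show ?thesis
      unfolding best_resp_Conf[OF x] by (auto simp: set_eq_iff dest: spec[of _ "- x i"])
  qed
  then show ?thesis
    using x deviation_iff_flip[OF x] unfolding strict_equilibrium_def by auto
qed

theorem lemma6:
  fixes u :: "('v::finite) utils"
  assumes "supermodular u"
  shows "(\<forall>x \<in> Conf. \<forall>y \<in> Conf. x \<le> y \<longrightarrow>
            f_plus u x \<le> f_plus u y \<and> f_minus u x \<le> f_minus u y \<and>
            g_plus u x \<le> g_plus u y \<and> g_minus u x \<le> g_minus u y)
       \<and> (\<forall>x \<in> Conf. equilibrium u x \<longleftrightarrow> f_plus u x = x \<and> x = f_minus u x)
       \<and> (\<forall>x \<in> Conf. strict_equilibrium u x \<longleftrightarrow> g_plus u x = x \<and> x = g_minus u x)"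
  unfolding f_plus_eq_reach_max f_minus_eq_reach_min g_plus_eq_reach_max g_minus_eq_reach_min
  by (simp add: reach_max_mono[OF assms gain_monotone_less] reach_min_mono[OF assms gain_monotone_less]
      reach_max_mono[OF assms gain_monotone_le] reach_min_mono[OF assms gain_monotone_le]
      reach_max_min_fixed_iff equilibrium_iff_no_improving_deviation
      strict_equilibrium_iff_no_weak_deviation)

end
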